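(* Let $\mathcal{T}=[0,T_{max}]$, $\mathcal{T}_d,\mathcal{T}_a\subseteq\mathcal{T}$ compact, $\mathcal{X}=[X_{min},X_{max}]$ with $0\le X_{min}<X_{max}$, $m$ a probability measure on $\mathcal{X}\times\mathcal{T}_a$, $G>0$, and $\alpha,\beta,\gamma>0$. Let $V:\mathbb{R}^+\to\mathbb{R}^+$ be a strictly decreasing Lipschitz continuous speed function with $V_{min}\le V\le V_{max}$ for constants $V_{max}>V_{min}>0$. Assume that for all $F\in\mathcal{P}_{m,G}$, $t_d\in\mathcal{T}_d$, $x\in\mathcal{X}$ one has $x+z_F(t_d)\le z_F(T_{max})$, so that the travel time below is well defined. Then the cost function $$J(t_d;x,t_a;F)=\alpha T_F(t_d,x)+\beta\big(t_a-t_d-T_F(t_d,x)\big)_++\gamma\big(t_d+T_F(t_d,x)-t_a\big)_+$$ is jointly continuous on $\mathcal{T}_d\times\mathcal{X}\times\mathcal{T}_a\times\mathcal{P}_{m,G}$ (with $\mathcal{P}_{m,G}$ carrying the weak convergence topology), and for each fixed $F\in\mathcal{P}_{m,G}$ it is Lipschitz continuous in $(t_d,x,t_a)$ on $\mathcal{T}_d\times\mathcal{X}\times\mathcal{T}_a$.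
   Context: $(y)_+=\max\{y,0\}$. $\lambda_2$ denotes Lebesgue measure on $\mathbb{R}^2$. $\mathcal{P}_{m,G}$ is the set of all Borel probability measures $F$ on $\mathcal{T}_d\times\mathcal{X}$ such that (i) $F(B)\le G\,\lambda_2(B)$ for every Borel $B\subseteq\mathcal{T}_d\times\mathcal{X}$, and (ii) $F(\mathcal{T}_d\times B)=m(B\times\mathcal{T}_a)$ for every Borel $B\subseteq\mathcal{X}$. For $z\in\mathcal{C}(\mathcal{T})$, $S_t(z):=\{(\tau,\xi)\,:\,\tau\in[0,t]\cap\mathcal{T}_d,\ \xi\in(z(t)-z(\tau),\infty)\cap\mathcal{X}\}$. For $F\in\mathcal{P}_{m,G}$, $z_F$ (the characteristic travel distance) is the unique continuous function on $\mathcal{T}$ with $z_F(t)=\int_0^t V\big(F(S_s(z_F))\big)\,ds$; it is strictly increasing, and $T_F(t_d,x):=z_F^{-1}\big(x+z_F(t_d)\big)-t_d$ is the travel time of a trip of length $x$ departing at $t_d$. *)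

theory Defs
  imports "HOL-Probability.Probability"
begin

text \<open>For F: first component = departure time tau, second = trip length xi.
  For m: first component = trip length x, second = desired arrival time t_a.\<close>

definition S_set :: "real set \<Rightarrow> real set \<Rightarrow> (real \<Rightarrow> real) \<Rightarrow> real \<Rightarrow> (real \<times> real) set" where
  "S_set Td X z t = {(tau, xi). tau \<in> {0..t} \<inter> Td \<and> xi \<in> {z t - z tau<..} \<inter> X}"

definition P_mG :: "real set \<Rightarrow> real set \<Rightarrow> real set \<Rightarrow> (real \<times> real) measure \<Rightarrow> real
    \<Rightarrow> (real \<times> real) measure set" where
  "P_mG Td X Ta m G = {F. sets F = sets borel \<and> prob_space F \<and> emeasure F (Td \<times> X) = 1
      \<and> (\<forall>B \<in> sets borel. B \<subseteq> Td \<times> X \<longrightarrow> emeasure F B \<le> ennreal G * emeasure lborel B)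
      \<and> (\<forall>B \<in> sets borel. B \<subseteq> X \<longrightarrow> emeasure F (Td \<times> B) = emeasure m (B \<times> Ta))}"

text \<open>Characteristic travel distance: the unique continuous function on [0,Tmax] solving the
  integral equation (normalised to 0 outside [0,Tmax] so that THE picks a single function).\<close>
definition zF :: "real \<Rightarrow> real set \<Rightarrow> real set \<Rightarrow> (real \<Rightarrow> real) \<Rightarrow> (real \<times> real) measure
    \<Rightarrow> real \<Rightarrow> real" where
  "zF Tmax Td X V F = (THE z. continuous_on {0..Tmax} z
      \<and> (\<forall>t \<in> {0..Tmax}. z t = integral {0..t} (\<lambda>s. V (measure F (S_set Td X z s))))
      \<and> (\<forall>t. t \<notin> {0..Tmax} \<longrightarrow> z t = 0))"

definition TF :: "real \<Rightarrow> real set \<Rightarrow> real set \<Rightarrow> (real \<Rightarrow> real) \<Rightarrow> (real \<times> real) measure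
    \<Rightarrow> real \<Rightarrow> real \<Rightarrow> real" where
  "TF Tmax Td X V F td x =
     the_inv_into {0..Tmax} (zF Tmax Td X V F) (x + zF Tmax Td X V F td) - td"

definition pos_part :: "real \<Rightarrow> real" where
  "pos_part y = max y 0"

definition Jcost :: "real \<Rightarrow> real \<Rightarrow> real \<Rightarrow> real \<Rightarrow> real set \<Rightarrow> real set \<Rightarrow> (real \<Rightarrow> real)
    \<Rightarrow> real \<Rightarrow> real \<Rightarrow> real \<Rightarrow> (real \<times> real) measure \<Rightarrow> real" where
  "Jcost \<alpha> \<beta> \<gamma> Tmax Td X V td x ta F =
     \<alpha> * TF Tmax Td X V F td x
     + \<beta> * pos_part (ta - td - TF Tmax Td X V F td x)
     + \<gamma> * pos_part (td + TF Tmax Td X V F td x - ta)"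

definition weak_conv2 :: "(nat \<Rightarrow> (real \<times> real) measure) \<Rightarrow> (real \<times> real) measure \<Rightarrow> bool" where
  "weak_conv2 Fs F \<longleftrightarrow> (\<forall>f :: real \<times> real \<Rightarrow> real. continuous_on UNIV f \<and> bounded (range f) \<longrightarrow>
      (\<lambda>n. integral\<^sup>L (Fs n) f) \<longlonglongrightarrow> integral\<^sup>L F f)"

end

theory Submission
  imports Defs
begin

text \<open>Since \<open>F\<close> has density at most \<open>G\<close> on \<open>Td \<times> X\<close>, shifting the cut-off time of \<open>S\<^sub>t(z)\<close> by
  \<open>\<delta>\<close> or perturbing \<open>z\<close> uniformly by \<open>\<epsilon>\<close> changes \<open>F(S\<^sub>t(z))\<close> by \<open>O(\<delta> + \<epsilon>)\<close>, so the
  speed \<open>V(F(S\<^sub>t(z)))\<close> is Lipschitz in \<open>z\<close>. With the Bielecki weight \<open>e\<^sup>-\<^sup>\<lambda>\<^sup>t\<close> the integral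
  equation for \<open>z\<^sub>F\<close> becomes a contraction on bounded continuous functions; this yields \<open>z\<^sub>F\<close>,
  and \<open>Vmin \<le> z\<^sub>F' \<le> Vmax\<close> makes \<open>z\<^sub>F\<^sup>-\<^sup>1\<close> Lipschitz with constant \<open>1/Vmin\<close>, whence \<open>T\<^sub>F\<close> and \<open>J\<close>
  are Lipschitz in \<open>(t\<^sub>d, x, t\<^sub>a)\<close>.

  For continuity in \<open>F\<close>, the indicator of \<open>S\<^sub>s(z)\<close> agrees with a continuous function outside a
  set of Lebesgue measure \<open>O(\<eta>)\<close>, hence of \<open>F\<close>-measure \<open>O(G \<eta>)\<close>, so weak convergence
  \<open>F\<^sub>n \<rightarrow> F\<close> gives \<open>F\<^sub>n(S\<^sub>s(z)) \<rightarrow> F(S\<^sub>s(z))\<close>. By dominated convergence the contractions of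
  \<open>F\<^sub>n\<close> converge at the fixed point of \<open>F\<close>, and contractivity transfers this to the fixed
  points, i.e. \<open>z\<^sub>F\<^sub>n \<rightarrow> z\<^sub>F\<close> uniformly.\<close>

section \<open>Lebesgue measure of graph strips\<close>

definition graph_strip :: "(real \<Rightarrow> real) \<Rightarrow> real \<Rightarrow> real \<Rightarrow> real \<Rightarrow> (real \<times> real) set" where
  "graph_strip g a b h = {p. fst p \<in> {a..b} \<and> g (fst p) \<le> snd p \<and> snd p \<le> g (fst p) + h}"

lemma closed_graph_strip:
  assumes "continuous_on UNIV g"
  shows "closed (graph_strip g a b h)"
proof -
  have "graph_strip g a b h = ({a..b} \<times> UNIV) \<inter> {p. g (fst p) \<le> snd p} \<inter> {p. snd p \<le> g (fst p) + h}"
    by (auto simp: graph_strip_def)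
  moreover have "closed \<dots>"
    by (intro closed_Int closed_Times closed_Collect_le continuous_intros
        continuous_on_compose2[OF assms]) auto
  ultimately show ?thesis by simp
qed

lemma emeasure_lborel_graph_strip:
  assumes g: "continuous_on UNIV g" and ab: "a \<le> b" and h: "0 \<le> h"
  shows "emeasure lborel (graph_strip g a b h) = ennreal ((b - a) * h)"
proof -
  let ?A = "graph_strip g a b h"
  have A: "?A \<in> sets (lborel \<Otimes>\<^sub>M lborel)"
    unfolding lborel_prod using closed_graph_strip[OF g] by (simp add: borel_closed)
  have "emeasure lborel ?A = emeasure (lborel \<Otimes>\<^sub>M lborel) ?A" by (simp add: lborel_prod)
  also have "\<dots> = (\<integral>\<^sup>+x. emeasure lborel (Pair x -` ?A) \<partial>lborel)"
    by (rule lborel.emeasure_pair_measure_alt[OF A])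
  also have "\<dots> = (\<integral>\<^sup>+x. ennreal h * indicator {a..b} x \<partial>lborel)"
  proof (intro nn_integral_cong)
    fix x :: real
    have "Pair x -` ?A = (if x \<in> {a..b} then {g x..g x + h} else {})"
      by (auto simp: graph_strip_def)
    then show "emeasure lborel (Pair x -` ?A) = ennreal h * indicator {a..b} x"
      using h by (simp add: indicator_def)
  qed
  also have "\<dots> = ennreal h * ennreal (b - a)"
    using ab by (subst nn_integral_cmult_indicator) auto
  also have "\<dots> = ennreal ((b - a) * h)"
    using ab h by (simp add: ennreal_mult' mult.commute)
  finally show ?thesis .
qed

lemma emeasure_lborel_Icc_times_Icc:
  assumes "a \<le> b" "c \<le> d"
  shows "emeasure lborel ({a..b} \<times> {c..d} :: (real \<times> real) set) = ennreal ((b - a) * (d - c))"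
proof -
  have "{a..b} \<times> {c..d} = graph_strip (\<lambda>_. c) a b (d - c)"
    by (auto simp: graph_strip_def)
  then show ?thesis
    using emeasure_lborel_graph_strip[of "\<lambda>_. c" a b "d - c"] assms by simp
qed

lemma emeasure_lborel_rectangle_Un_strip_le:
  assumes g: "continuous_on UNIV g" and "a \<le> b" "c \<le> d" "0 \<le> T" "0 \<le> h"
  shows "emeasure lborel ({a..b} \<times> {c..d} \<union> graph_strip g 0 T h)
    \<le> ennreal ((b - a) * (d - c) + T * h)"
proof -
  have "emeasure lborel ({a..b} \<times> {c..d} \<union> graph_strip g 0 T h)
      \<le> emeasure lborel ({a..b} \<times> {c..d}) + emeasure lborel (graph_strip g 0 T h)"
    using closed_graph_strip[OF g]
    by (intro emeasure_subadditive) (auto intro!: borel_closed closed_Times)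
  also have "\<dots> = ennreal ((b - a) * (d - c)) + ennreal (T * h)"
    using assms by (simp add: emeasure_lborel_Icc_times_Icc emeasure_lborel_graph_strip)
  also have "\<dots> = ennreal ((b - a) * (d - c) + T * h)"
    using assms by (intro ennreal_plus[symmetric]) auto
  finally show ?thesis .
qed

lemma clamp_real_in_Icc: "(a::real) \<le> b \<Longrightarrow> clamp a b t \<in> {a..b}"
  using clamp_in_interval[of a b t] by simp

lemma clamp_real_cancel: "(t::real) \<in> {a..b} \<Longrightarrow> clamp a b t = t"
  using clamp_cancel_cbox[of t a b] by simp

lemma continuous_on_clamp_real:
  "continuous_on {a..b} (z::real \<Rightarrow> real) \<Longrightarrow> continuous_on S (\<lambda>t. z (clamp a b t))"
  using clamp_continuous_on[of a b z] by simp

lemma continuous_on_by_dist_bound: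
  fixes f h :: "real \<Rightarrow> real"
  assumes h: "continuous_on S h"
    and bound: "\<And>x y. x \<in> S \<Longrightarrow> y \<in> S \<Longrightarrow> \<bar>f x - f y\<bar> \<le> K * (\<bar>x - y\<bar> + \<bar>h x - h y\<bar>)"
  shows "continuous_on S f"
  unfolding continuous_on_def
proof
  fix x assume x: "x \<in> S"
  have "((\<lambda>y. K * (\<bar>y - x\<bar> + \<bar>h y - h x\<bar>)) \<longlongrightarrow> K * (\<bar>x - x\<bar> + \<bar>h x - h x\<bar>)) (at x within S)"
    using h x unfolding continuous_on_def by (intro tendsto_intros) auto
  then have to_0: "((\<lambda>y. K * (\<bar>y - x\<bar> + \<bar>h y - h x\<bar>)) \<longlongrightarrow> 0) (at x within S)"
    by simp
  have "eventually (\<lambda>y. norm (f y - f x) \<le> K * (\<bar>y - x\<bar> + \<bar>h y - h x\<bar>)) (at x within S)"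
    unfolding eventually_at_filter using bound x by (intro always_eventually) auto
  then show "(f \<longlongrightarrow> f x) (at x within S)"
    by (rule LIM_zero_cancel[OF Lim_null_comparison[OF _ to_0]])
qed

lemma LIMSEQ_by_abs_diff_bound:
  fixes u b :: "nat \<Rightarrow> real"
  assumes "\<And>n. \<bar>u n - l\<bar> \<le> b n" and "b \<longlonglongrightarrow> 0"
  shows "u \<longlonglongrightarrow> l"
  by (rule LIM_zero_cancel, rule Lim_null_comparison[of _ b])
     (use assms in \<open>auto intro: always_eventually\<close>)

lemma has_integral_exp_mult:
  fixes c u :: real
  assumes "c \<noteq> 0" "0 \<le> u"
  shows "((\<lambda>s. exp (c * s)) has_integral (exp (c * u) - 1) / c) {0..u}"
proof -
  have "((\<lambda>s. exp (c * s)) has_integral (exp (c * u) / c - exp (c * 0) / c)) {0..u}"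
  proof (rule fundamental_theorem_of_calculus[OF assms(2)])
    fix x :: real
    have "((\<lambda>s. exp (c * s) / c) has_real_derivative (exp (c * x) * (c * 1) / c)) (at x within {0..u})"
      using assms(1) by (intro derivative_eq_intros) auto
    then show "((\<lambda>s. exp (c * s) / c) has_vector_derivative exp (c * x)) (at x within {0..u})"
      using assms(1) by (simp add: has_real_derivative_iff_has_vector_derivative)
  qed
  then show ?thesis by (simp add: diff_divide_distrib)
qed

lemma fixed_point_dist_le:
  fixes f g :: "'a::metric_space \<Rightarrow> 'a"
  assumes contraction: "\<And>x y. dist (f x) (f y) \<le> c * dist x y" and "c < 1"
    and "f x = x" "g y = y"
  shows "dist x y \<le> dist (f y) (g y) / (1 - c)"
proof -
  have "dist x y \<le> dist (f x) (f y) + dist (f y) (g y)"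
    using assms(3,4) dist_triangle[of "f x" "g y" "f y"] by simp
  also have "\<dots> \<le> c * dist x y + dist (f y) (g y)"
    using contraction by simp
  finally show ?thesis using \<open>c < 1\<close> by (simp add: field_simps)
qed

section \<open>Measures with bounded density\<close>

lemma abs_integral_minus_measure_le:
  fixes H :: "'a measure" and f :: "'a \<Rightarrow> real"
  assumes H: "finite_measure H" and S: "S \<in> sets H" and E: "E \<in> sets H"
    and f: "f \<in> borel_measurable H" "\<And>p. 0 \<le> f p" "\<And>p. f p \<le> 1"
    and agree: "\<And>p. p \<in> space H \<Longrightarrow> p \<notin> E \<Longrightarrow> f p = indicator S p"
  shows "\<bar>integral\<^sup>L H f - measure H S\<bar> \<le> measure H E"
proof -
  interpret finite_measure H by (rule H)
  have int_f: "integrable H f"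
    by (rule integrable_const_bound[where B=1]) (use f in auto)
  have int_S: "integrable H (indicator S :: _ \<Rightarrow> real)"
    and int_E: "integrable H (indicator E :: _ \<Rightarrow> real)"
    using S E by (auto intro!: integrable_const_bound[where B=1])
  have sandwich: "indicator S p - indicator E p \<le> f p \<and> f p \<le> indicator S p + indicator E p"
    if "p \<in> space H" for p
    using agree[OF that] f(2,3)[of p] by (cases "p \<in> E") (auto simp: indicator_def)
  have "integral\<^sup>L H (\<lambda>p. indicator S p - indicator E p) \<le> integral\<^sup>L H f"
    by (rule integral_mono) (use int_S int_E int_f sandwich in auto)
  moreover have "integral\<^sup>L H f \<le> integral\<^sup>L H (\<lambda>p. indicator S p + indicator E p)"
    by (rule integral_mono) (use int_S int_E int_f sandwich in auto)
  ultimately show ?thesis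
    using Bochner_Integration.integral_diff[OF int_S int_E]
      Bochner_Integration.integral_add[OF int_S int_E] S E
    by simp
qed

definition density_bounded :: "(real \<times> real) set \<Rightarrow> real \<Rightarrow> (real \<times> real) measure \<Rightarrow> bool" where
  "density_bounded K G F \<longleftrightarrow> sets F = sets borel \<and> prob_space F \<and> emeasure F K = 1
      \<and> (\<forall>B \<in> sets borel. B \<subseteq> K \<longrightarrow> emeasure F B \<le> ennreal G * emeasure lborel B)"

lemma P_mG_density_bounded: "F \<in> P_mG Td X Ta m G \<Longrightarrow> density_bounded (Td \<times> X) G F"
  by (simp add: P_mG_def density_bounded_def)

lemma density_bounded_space: "density_bounded K G F \<Longrightarrow> space F = UNIV"
  unfolding density_bounded_def using sets_eq_imp_space_eq[of F borel] by auto

lemma density_bounded_measure_le: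
  assumes F: "density_bounded K G F" and G: "0 \<le> G"
    and B: "B \<in> sets borel" "B \<subseteq> K"
    and C: "C \<in> sets borel" "B \<subseteq> C" "emeasure lborel C \<le> ennreal r" and r: "0 \<le> r"
  shows "measure F B \<le> G * r"
proof -
  interpret prob_space F using F by (simp add: density_bounded_def)
  have "emeasure F B \<le> ennreal G * emeasure lborel B"
    using F B by (auto simp: density_bounded_def)
  also have "\<dots> \<le> ennreal G * emeasure lborel C"
    using C B by (intro mult_left_mono emeasure_mono) auto
  also have "\<dots> \<le> ennreal G * ennreal r"
    using C by (intro mult_left_mono) auto
  also have "\<dots> = ennreal (G * r)"
    using G r by (simp add: ennreal_mult)
  finally have "ennreal (measure F B) \<le> ennreal (G * r)"
    by (simp add: emeasure_eq_measure)
  then show ?thesis using G r by (simp add: ennreal_le_iff)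
qed

lemma density_bounded_measure_compl:
  assumes F: "density_bounded K G F" and K: "K \<in> sets borel"
  shows "measure F (UNIV - K) = 0"
proof -
  interpret prob_space F using F by (simp add: density_bounded_def)
  have "prob K = 1" using F by (simp add: density_bounded_def emeasure_eq_measure)
  then show ?thesis
    using prob_compl[of K] K F density_bounded_space[OF F] by (simp add: density_bounded_def)
qed

lemma S_set_cong:
  "(\<And>\<tau>. \<tau> \<in> {0..s} \<Longrightarrow> z1 \<tau> = z2 \<tau>) \<Longrightarrow> S_set Td X z1 s = S_set Td X z2 s"
  unfolding S_set_def by (cases "0 \<le> s") auto

locale travel_model =
  fixes Tmax :: real and Td :: "real set" and Xmin Xmax G :: real
    and V :: "real \<Rightarrow> real" and Vmin Vmax LV :: real
  assumes Tmax_pos: "0 < Tmax" and compact_Td: "compact Td" and Td_subset: "Td \<subseteq> {0..Tmax}"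
    and Xmin_nonneg: "0 \<le> Xmin" and Xmin_less: "Xmin < Xmax" and G_pos: "0 < G"
    and V_lipschitz: "LV-lipschitz_on {0..} V" and Vmin_pos: "0 < Vmin"
    and V_bounds: "\<And>u. 0 \<le> u \<Longrightarrow> Vmin \<le> V u \<and> V u \<le> Vmax"
begin

abbreviation admissible :: "(real \<times> real) measure \<Rightarrow> bool" where
  "admissible F \<equiv> density_bounded (Td \<times> {Xmin..Xmax}) G F"

lemma LV_nonneg: "0 \<le> LV"
  using V_lipschitz lipschitz_on_nonneg by blast

lemma Vmin_le_Vmax: "Vmin \<le> Vmax"
  using V_bounds[of 0] by auto

lemma abs_V_diff_le: "0 \<le> a \<Longrightarrow> 0 \<le> b \<Longrightarrow> \<bar>V a - V b\<bar> \<le> LV * \<bar>a - b\<bar>"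
  using lipschitz_onD[OF V_lipschitz, of a b] by (auto simp: dist_real_def)

lemma clamp_Tmax: "clamp 0 Tmax t \<in> {0..Tmax}"
  using clamp_real_in_Icc Tmax_pos by simp

lemma S_set_eq:
  assumes "s \<in> {0..Tmax}"
  shows "S_set Td {Xmin..Xmax} z s
    = ((Td \<inter> {0..s}) \<times> {Xmin..Xmax}) \<inter> {p. z s - z (clamp 0 Tmax (fst p)) < snd p}"
  using Td_subset assms by (auto simp: S_set_def clamp_real_cancel subset_iff)

lemma S_set_borel:
  assumes z: "continuous_on {0..Tmax} z" and s: "s \<in> {0..Tmax}"
  shows "S_set Td {Xmin..Xmax} z s \<in> sets borel"
proof -
  have "closed ((Td \<inter> {0..s}) \<times> {Xmin..Xmax})"
    using compact_Td by (intro closed_Times closed_Int compact_imp_closed) auto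
  moreover have "open {p::real \<times> real. z s - z (clamp 0 Tmax (fst p)) < snd p}"
    by (intro open_Collect_less continuous_intros
        continuous_on_compose2[OF continuous_on_clamp_real[OF z]]) auto
  ultimately show ?thesis
    unfolding S_set_eq[OF s] by (intro sets.Int borel_closed borel_open)
qed

lemma S_set_subset: "S_set Td {Xmin..Xmax} z s \<subseteq> Td \<times> {Xmin..Xmax}"
  by (auto simp: S_set_def)

text \<open>Where \<open>S\<^sub>t\<^sub>1(z\<^sub>1)\<close> and \<open>S\<^sub>t\<^sub>2(z\<^sub>2)\<close> differ, either the departure time lies between \<open>t\<^sub>1\<close>
  and \<open>t\<^sub>2\<close> or the trip length lies within \<open>d\<close> of the boundary curve \<open>\<xi> = z\<^sub>1(t\<^sub>1) - z\<^sub>1(\<tau>)\<close>;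
  the density bound turns the Lebesgue measure of these two regions into a bound on \<open>F\<close>.\<close>

lemma S_set_diff_subset:
  assumes close: "\<And>\<tau>. \<tau> \<in> {0..min t1 t2} \<Longrightarrow> \<bar>(z1 t1 - z1 \<tau>) - (z2 t2 - z2 \<tau>)\<bar> \<le> d"
  shows "S_set Td {Xmin..Xmax} z1 t1 - S_set Td {Xmin..Xmax} z2 t2
    \<subseteq> {min t1 t2..max t1 t2} \<times> {Xmin..Xmax} \<union> graph_strip (\<lambda>\<tau>. z1 t1 - z1 (clamp 0 Tmax \<tau>)) 0 Tmax d"
proof
  fix p assume p: "p \<in> S_set Td {Xmin..Xmax} z1 t1 - S_set Td {Xmin..Xmax} z2 t2"
  obtain \<tau> \<xi> where p_eq: "p = (\<tau>, \<xi>)" by (cases p)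
  have \<tau>: "\<tau> \<in> Td" "0 \<le> \<tau>" "\<tau> \<le> t1" and \<xi>: "\<xi> \<in> {Xmin..Xmax}" "z1 t1 - z1 \<tau> < \<xi>"
    using p p_eq by (auto simp: S_set_def)
  have "\<tau> \<in> {0..Tmax}" using \<tau> Td_subset by auto
  show "p \<in> {min t1 t2..max t1 t2} \<times> {Xmin..Xmax} \<union> graph_strip (\<lambda>\<tau>. z1 t1 - z1 (clamp 0 Tmax \<tau>)) 0 Tmax d"
  proof (cases "t2 < \<tau>")
    case True
    then show ?thesis using \<tau> \<xi> p_eq by auto
  next
    case False
    then have "\<not> z2 t2 - z2 \<tau> < \<xi>" using p p_eq \<tau> \<xi> by (auto simp: S_set_def)
    moreover have "\<bar>(z1 t1 - z1 \<tau>) - (z2 t2 - z2 \<tau>)\<bar> \<le> d" using close False \<tau> by auto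
    ultimately show ?thesis
      using \<xi> \<open>\<tau> \<in> {0..Tmax}\<close> p_eq by (auto simp: graph_strip_def clamp_real_cancel)
  qed
qed

lemma measure_S_set_diff_le:
  assumes F: "admissible F"
    and z1: "continuous_on {0..Tmax} z1" and z2: "continuous_on {0..Tmax} z2"
    and t1: "t1 \<in> {0..Tmax}" and t2: "t2 \<in> {0..Tmax}" and d: "0 \<le> d"
    and close: "\<And>\<tau>. \<tau> \<in> {0..min t1 t2} \<Longrightarrow> \<bar>(z1 t1 - z1 \<tau>) - (z2 t2 - z2 \<tau>)\<bar> \<le> d"
  shows "measure F (S_set Td {Xmin..Xmax} z1 t1) - measure F (S_set Td {Xmin..Xmax} z2 t2)
           \<le> G * (\<bar>t1 - t2\<bar> * (Xmax - Xmin) + Tmax * d)"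
proof -
  interpret prob_space F using F by (simp add: density_bounded_def)
  have sets_F: "sets F = sets borel" using F by (simp add: density_bounded_def)
  define S1 where "S1 = S_set Td {Xmin..Xmax} z1 t1"
  define S2 where "S2 = S_set Td {Xmin..Xmax} z2 t2"
  define g where "g = (\<lambda>\<tau>. z1 t1 - z1 (clamp 0 Tmax \<tau>))"
  define C where "C = {min t1 t2..max t1 t2} \<times> {Xmin..Xmax} \<union> graph_strip g 0 Tmax d"
  have g: "continuous_on UNIV g"
    unfolding g_def by (intro continuous_intros continuous_on_clamp_real[OF z1])
  have S1: "S1 \<in> sets borel" and S2: "S2 \<in> sets borel"
    unfolding S1_def S2_def using S_set_borel z1 z2 t1 t2 by auto
  have C: "C \<in> sets borel"
    unfolding C_def using closed_graph_strip[OF g] by (auto intro!: borel_closed closed_Times)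
  have "max t1 t2 - min t1 t2 = \<bar>t1 - t2\<bar>" by auto
  then have C_measure: "emeasure lborel C \<le> ennreal (\<bar>t1 - t2\<bar> * (Xmax - Xmin) + Tmax * d)"
    using emeasure_lborel_rectangle_Un_strip_le[OF g, of "min t1 t2" "max t1 t2" Xmin Xmax Tmax d]
      Xmin_less Tmax_pos d
    unfolding C_def by simp
  have "measure F (S1 - S2) \<le> G * (\<bar>t1 - t2\<bar> * (Xmax - Xmin) + Tmax * d)"
  proof (rule density_bounded_measure_le[OF F _ _ _ C _ C_measure])
    show "S1 - S2 \<subseteq> C"
      using S_set_diff_subset[OF close] by (simp add: S1_def S2_def C_def g_def)
    show "S1 - S2 \<subseteq> Td \<times> {Xmin..Xmax}"
      using S_set_subset[of z1 t1] by (auto simp: S1_def)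
  qed (use S1 S2 G_pos Xmin_less Tmax_pos d in auto)
  moreover have "measure F S1 \<le> measure F (S1 - S2) + measure F S2"
  proof -
    have "measure F S1 \<le> measure F ((S1 - S2) \<union> S2)"
      using S1 S2 sets_F by (intro finite_measure_mono) auto
    also have "\<dots> = measure F (S1 - S2) + measure F S2"
      using S1 S2 sets_F by (intro finite_measure_Union) auto
    finally show ?thesis .
  qed
  ultimately show ?thesis unfolding S1_def S2_def by simp
qed

lemma abs_measure_S_set_diff_le:
  assumes F: "admissible F"
    and z1: "continuous_on {0..Tmax} z1" and z2: "continuous_on {0..Tmax} z2"
    and t1: "t1 \<in> {0..Tmax}" and t2: "t2 \<in> {0..Tmax}" and d: "0 \<le> d"
    and close: "\<And>\<tau>. \<tau> \<in> {0..min t1 t2} \<Longrightarrow> \<bar>(z1 t1 - z1 \<tau>) - (z2 t2 - z2 \<tau>)\<bar> \<le> d"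
  shows "\<bar>measure F (S_set Td {Xmin..Xmax} z1 t1) - measure F (S_set Td {Xmin..Xmax} z2 t2)\<bar>
           \<le> G * (\<bar>t1 - t2\<bar> * (Xmax - Xmin) + Tmax * d)"
  using measure_S_set_diff_le[OF F z1 z2 t1 t2 d close]
    measure_S_set_diff_le[OF F z2 z1 t2 t1 d] close
  by (fastforce simp: abs_minus_commute min.commute)

definition speed :: "(real \<times> real) measure \<Rightarrow> (real \<Rightarrow> real) \<Rightarrow> real \<Rightarrow> real" where
  "speed F z s = V (measure F (S_set Td {Xmin..Xmax} z s))"

lemma speed_bounds: "Vmin \<le> speed F z s" "speed F z s \<le> Vmax"
  using V_bounds[of "measure F (S_set Td {Xmin..Xmax} z s)"] by (auto simp: speed_def)

lemma abs_speed_le: "\<bar>speed F z s\<bar> \<le> Vmax"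
  using speed_bounds[of F z s] Vmin_pos by auto

lemma speed_cong: "(\<And>\<tau>. \<tau> \<in> {0..s} \<Longrightarrow> z1 \<tau> = z2 \<tau>) \<Longrightarrow> speed F z1 s = speed F z2 s"
  unfolding speed_def using S_set_cong by metis

lemma continuous_on_speed:
  assumes F: "admissible F" and z: "continuous_on {0..Tmax} z"
  shows "continuous_on {0..Tmax} (speed F z)"
proof (rule continuous_on_by_dist_bound[OF z])
  fix x y assume x: "x \<in> {0..Tmax}" and y: "y \<in> {0..Tmax}"
  have "\<bar>speed F z x - speed F z y\<bar>
      \<le> LV * \<bar>measure F (S_set Td {Xmin..Xmax} z x) - measure F (S_set Td {Xmin..Xmax} z y)\<bar>"
    unfolding speed_def by (rule abs_V_diff_le) auto
  also have "\<dots> \<le> LV * (G * (\<bar>x - y\<bar> * (Xmax - Xmin) + Tmax * \<bar>z x - z y\<bar>))"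
    using abs_measure_S_set_diff_le[OF F z z x y] LV_nonneg by (intro mult_left_mono) auto
  also have "\<dots> \<le> LV * (G * ((Xmax - Xmin + Tmax) * (\<bar>x - y\<bar> + \<bar>z x - z y\<bar>)))"
  proof (intro mult_left_mono)
    show "\<bar>x - y\<bar> * (Xmax - Xmin) + Tmax * \<bar>z x - z y\<bar>
        \<le> (Xmax - Xmin + Tmax) * (\<bar>x - y\<bar> + \<bar>z x - z y\<bar>)"
    proof -
      have "(Xmax - Xmin + Tmax) * (\<bar>x - y\<bar> + \<bar>z x - z y\<bar>)
          = \<bar>x - y\<bar> * (Xmax - Xmin) + Tmax * \<bar>z x - z y\<bar>
            + ((Xmax - Xmin) * \<bar>z x - z y\<bar> + Tmax * \<bar>x - y\<bar>)"
        by (simp add: algebra_simps)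
      moreover have "0 \<le> (Xmax - Xmin) * \<bar>z x - z y\<bar> + Tmax * \<bar>x - y\<bar>"
        using Xmin_less Tmax_pos by simp
      ultimately show ?thesis by linarith
    qed
  qed (use LV_nonneg G_pos in auto)
  finally show "\<bar>speed F z x - speed F z y\<bar>
      \<le> LV * G * (Xmax - Xmin + Tmax) * (\<bar>x - y\<bar> + \<bar>z x - z y\<bar>)"
    by (simp add: mult.assoc)
qed

lemma speed_dist_le:
  assumes F: "admissible F"
    and z1: "continuous_on {0..Tmax} z1" and z2: "continuous_on {0..Tmax} z2"
    and s: "s \<in> {0..Tmax}" and d: "\<And>\<tau>. \<tau> \<in> {0..s} \<Longrightarrow> \<bar>z1 \<tau> - z2 \<tau>\<bar> \<le> d"
  shows "\<bar>speed F z1 s - speed F z2 s\<bar> \<le> 2 * LV * G * Tmax * d"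
proof -
  have "0 \<le> d" using d[of 0] s by auto
  have "\<bar>speed F z1 s - speed F z2 s\<bar>
      \<le> LV * \<bar>measure F (S_set Td {Xmin..Xmax} z1 s) - measure F (S_set Td {Xmin..Xmax} z2 s)\<bar>"
    unfolding speed_def by (rule abs_V_diff_le) auto
  also have "\<dots> \<le> LV * (G * (\<bar>s - s\<bar> * (Xmax - Xmin) + Tmax * (2 * d)))"
  proof (intro mult_left_mono LV_nonneg abs_measure_S_set_diff_le[OF F z1 z2 s s])
    fix \<tau> assume "\<tau> \<in> {0..min s s}"
    then show "\<bar>(z1 s - z1 \<tau>) - (z2 s - z2 \<tau>)\<bar> \<le> 2 * d"
      using d[of s] d[of \<tau>] s by auto
  qed (use \<open>0 \<le> d\<close> in auto)
  finally show ?thesis by (simp add: algebra_simps)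
qed

section \<open>The travel distance as a fixed point\<close>

text \<open>Bielecki's trick: in the variable \<open>f(t) = e\<^sup>-\<^sup>\<lambda>\<^sup>t z(t)\<close>, extended constantly outside
  \<open>[0, Tmax]\<close> to a bounded continuous function on \<open>\<real>\<close>, the integral equation for \<open>z\<^sub>F\<close> becomes a
  fixed point equation whose map is a contraction with constant \<open>1/2\<close> once
  \<open>\<lambda> \<ge> 4 LV G Tmax\<close>.\<close>

definition bielecki_rate :: real where
  "bielecki_rate = 4 * LV * G * Tmax + 1"

lemma bielecki_rate_pos: "0 < bielecki_rate"
  using LV_nonneg G_pos Tmax_pos unfolding bielecki_rate_def
  by (simp add: add_nonneg_pos)

definition unweighted :: "(real \<Rightarrow>\<^sub>C real) \<Rightarrow> real \<Rightarrow> real" where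
  "unweighted f s = exp (bielecki_rate * s) * apply_bcontfun f s"

lemma continuous_on_unweighted: "continuous_on S (unweighted f)"
  unfolding unweighted_def by (intro continuous_intros) auto

definition picard_raw :: "(real \<times> real) measure \<Rightarrow> (real \<Rightarrow>\<^sub>C real) \<Rightarrow> real \<Rightarrow> real" where
  "picard_raw F f t = exp (- bielecki_rate * clamp 0 Tmax t) *
     integral {0..clamp 0 Tmax t} (speed F (unweighted f))"

definition picard :: "(real \<times> real) measure \<Rightarrow> (real \<Rightarrow>\<^sub>C real) \<Rightarrow> (real \<Rightarrow>\<^sub>C real)" where
  "picard F f = Bcontfun (picard_raw F f)"

lemma picard_raw_bcontfun:
  assumes F: "admissible F"
  shows "picard_raw F f \<in> bcontfun"
proof (rule bcontfun_normI)
  let ?h = "speed F (unweighted f)"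
  have h: "continuous_on {0..Tmax} ?h"
    by (rule continuous_on_speed[OF F continuous_on_unweighted])
  have "continuous_on {0..Tmax} (\<lambda>u. exp (- bielecki_rate * u) * integral {0..u} ?h)"
    by (intro continuous_intros indefinite_integral_continuous_1 integrable_continuous_interval h)
  then show "continuous_on UNIV (picard_raw F f)"
    unfolding picard_raw_def by (rule continuous_on_clamp_real)
  fix t
  define u where "u = clamp 0 Tmax t"
  have u: "u \<in> {0..Tmax}" unfolding u_def by (rule clamp_Tmax)
  have "norm (integral {0..u} ?h) \<le> integral {0..u} (\<lambda>_. Vmax)"
    using u by (intro integral_norm_bound_integral integrable_continuous_interval
        continuous_on_subset[OF h]) (auto simp: abs_speed_le)
  also have "\<dots> \<le> Vmax * Tmax"
    using u Vmin_pos Vmin_le_Vmax by (simp add: mult_left_mono)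
  finally have "\<bar>integral {0..u} ?h\<bar> \<le> Vmax * Tmax" by simp
  moreover have "exp (- bielecki_rate * u) \<le> 1" using u bielecki_rate_pos by simp
  ultimately have "\<bar>picard_raw F f t\<bar> \<le> 1 * (Vmax * Tmax)"
    unfolding picard_raw_def u_def[symmetric] abs_mult by (intro mult_mono) auto
  then show "norm (picard_raw F f t) \<le> Vmax * Tmax" by simp
qed

lemma picard_apply: "admissible F \<Longrightarrow> apply_bcontfun (picard F f) t = picard_raw F f t"
  unfolding picard_def using picard_raw_bcontfun by (simp add: Bcontfun_inverse)

lemma speed_unweighted_dist_le:
  assumes F: "admissible F" and s: "s \<in> {0..Tmax}"
  shows "\<bar>speed F (unweighted f1) s - speed F (unweighted f2) s\<bar>
    \<le> 2 * LV * G * Tmax * dist f1 f2 * exp (bielecki_rate * s)"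
proof -
  have "\<bar>speed F (unweighted f1) s - speed F (unweighted f2) s\<bar>
      \<le> 2 * LV * G * Tmax * (exp (bielecki_rate * s) * dist f1 f2)"
  proof (rule speed_dist_le[OF F continuous_on_unweighted continuous_on_unweighted s])
    fix \<tau> assume \<tau>: "\<tau> \<in> {0..s}"
    have "\<bar>unweighted f1 \<tau> - unweighted f2 \<tau>\<bar> = exp (bielecki_rate * \<tau>) * \<bar>f1 \<tau> - f2 \<tau>\<bar>"
      unfolding unweighted_def by (simp add: abs_mult right_diff_distrib[symmetric])
    also have "\<dots> \<le> exp (bielecki_rate * s) * dist f1 f2"
      using \<tau> bielecki_rate_pos dist_bounded[of f1 \<tau> f2]
      by (intro mult_mono) (auto simp: dist_real_def)
    finally show "\<bar>unweighted f1 \<tau> - unweighted f2 \<tau>\<bar> \<le> exp (bielecki_rate * s) * dist f1 f2" .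
  qed
  then show ?thesis by (simp add: algebra_simps)
qed

lemma picard_contraction:
  assumes F: "admissible F"
  shows "dist (picard F f1) (picard F f2) \<le> 1/2 * dist f1 f2"
proof (rule dist_bound)
  fix t
  define u where "u = clamp 0 Tmax t"
  define C where "C = 2 * LV * G * Tmax * dist f1 f2"
  define w1 where "w1 = unweighted f1"
  define w2 where "w2 = unweighted f2"
  have u: "u \<in> {0..Tmax}" unfolding u_def by (rule clamp_Tmax)
  have "0 \<le> C" unfolding C_def using LV_nonneg G_pos Tmax_pos by simp
  have i1: "speed F w1 integrable_on {0..u}" and i2: "speed F w2 integrable_on {0..u}"
    unfolding w1_def w2_def using u
    by (intro integrable_continuous_interval
        continuous_on_subset[OF continuous_on_speed[OF F continuous_on_unweighted]]; auto)+
  have exp_int: "((\<lambda>s. C * exp (bielecki_rate * s))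
      has_integral C * ((exp (bielecki_rate * u) - 1) / bielecki_rate)) {0..u}"
    using has_integral_exp_mult[of bielecki_rate u] u bielecki_rate_pos
    by (intro has_integral_mult_right) auto
  have "\<bar>integral {0..u} (speed F w1) - integral {0..u} (speed F w2)\<bar>
      = norm (integral {0..u} (\<lambda>s. speed F w1 s - speed F w2 s))"
    using integral_diff[OF i1 i2] by simp
  also have "\<dots> \<le> integral {0..u} (\<lambda>s. C * exp (bielecki_rate * s))"
    using speed_unweighted_dist_le[OF F] u unfolding w1_def w2_def C_def
    by (intro integral_norm_bound_integral integrable_diff i1[unfolded w1_def]
        i2[unfolded w2_def] has_integral_integrable[OF exp_int[unfolded C_def]]) auto
  also have "\<dots> = C * ((exp (bielecki_rate * u) - 1) / bielecki_rate)"
    by (rule integral_unique[OF exp_int])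
  finally have I: "\<bar>integral {0..u} (speed F w1) - integral {0..u} (speed F w2)\<bar>
      \<le> C * ((exp (bielecki_rate * u) - 1) / bielecki_rate)" .
  have "dist (picard F f1 t) (picard F f2 t)
      = exp (- bielecki_rate * u) * \<bar>integral {0..u} (speed F w1) - integral {0..u} (speed F w2)\<bar>"
    unfolding picard_apply[OF F] picard_raw_def dist_real_def u_def[symmetric]
      w1_def[symmetric] w2_def[symmetric]
    by (simp add: abs_mult right_diff_distrib[symmetric])
  also have "\<dots> \<le> exp (- bielecki_rate * u) * (C * ((exp (bielecki_rate * u) - 1) / bielecki_rate))"
    using I by (intro mult_left_mono) auto
  also have "\<dots> = C * (1 - exp (- bielecki_rate * u)) / bielecki_rate"
    by (simp add: field_simps exp_minus)
  also have "\<dots> \<le> C / bielecki_rate"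
    using \<open>0 \<le> C\<close> u bielecki_rate_pos by (intro divide_right_mono mult_left_le) auto
  also have "\<dots> \<le> 1/2 * dist f1 f2"
    using LV_nonneg G_pos Tmax_pos bielecki_rate_pos
    unfolding bielecki_rate_def C_def by (simp add: field_simps mult_right_mono)
  finally show "dist (picard F f1 t) (picard F f2 t) \<le> 1/2 * dist f1 f2" .
qed

definition weighted_fixpoint :: "(real \<times> real) measure \<Rightarrow> (real \<Rightarrow>\<^sub>C real)" where
  "weighted_fixpoint F = (THE f. picard F f = f)"

lemma ex1_picard_fixpoint: "admissible F \<Longrightarrow> \<exists>!f. picard F f = f"
  by (rule banach_fix_type[of "1/2"]) (use picard_contraction in auto)

lemma picard_weighted_fixpoint: "admissible F \<Longrightarrow> picard F (weighted_fixpoint F) = weighted_fixpoint F"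
  unfolding weighted_fixpoint_def by (rule theI'[OF ex1_picard_fixpoint])

lemma weighted_fixpoint_unique: "admissible F \<Longrightarrow> picard F f = f \<Longrightarrow> f = weighted_fixpoint F"
  unfolding weighted_fixpoint_def by (rule the1_equality[OF ex1_picard_fixpoint, symmetric])

definition travel_dist :: "(real \<times> real) measure \<Rightarrow> real \<Rightarrow> real" where
  "travel_dist F t = (if t \<in> {0..Tmax} then unweighted (weighted_fixpoint F) t else 0)"

lemma continuous_on_travel_dist: "continuous_on {0..Tmax} (travel_dist F)"
  using continuous_on_unweighted by (rule continuous_on_eq) (auto simp: travel_dist_def)

lemma travel_dist_eq_integral:
  assumes F: "admissible F" and t: "t \<in> {0..Tmax}"
  shows "travel_dist F t = integral {0..t} (speed F (travel_dist F))"
proof -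
  let ?w = "unweighted (weighted_fixpoint F)"
  have "apply_bcontfun (weighted_fixpoint F) t = picard_raw F (weighted_fixpoint F) t"
    using picard_weighted_fixpoint[OF F] picard_apply[OF F, of "weighted_fixpoint F" t] by simp
  also have "\<dots> = exp (- bielecki_rate * t) * integral {0..t} (speed F ?w)"
    unfolding picard_raw_def clamp_real_cancel[OF t] ..
  also have "integral {0..t} (speed F ?w) = integral {0..t} (speed F (travel_dist F))"
    by (intro integral_cong speed_cong) (use t in \<open>auto simp: travel_dist_def\<close>)
  finally show ?thesis
    using t by (simp add: travel_dist_def unweighted_def exp_minus field_simps)
qed

lemma travel_dist_unique:
  assumes F: "admissible F" and z: "continuous_on {0..Tmax} z"
    and z_eq: "\<forall>t \<in> {0..Tmax}. z t = integral {0..t} (\<lambda>s. V (measure F (S_set Td {Xmin..Xmax} z s)))"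
    and z_outside: "\<forall>t. t \<notin> {0..Tmax} \<longrightarrow> z t = 0"
  shows "z = travel_dist F"
proof -
  have "continuous_on (cbox 0 Tmax) (\<lambda>t. exp (- bielecki_rate * t) * z t)"
    unfolding cbox_interval by (intro continuous_intros z)
  then obtain f :: "real \<Rightarrow>\<^sub>C real"
    where f: "\<And>t. apply_bcontfun f t = exp (- bielecki_rate * clamp 0 Tmax t) * z (clamp 0 Tmax t)"
    by (rule continuous_on_cbox_bcontfunE) blast
  have unweighted_f: "unweighted f s = z s" if "s \<in> {0..Tmax}" for s
    using that by (simp add: unweighted_def f clamp_real_cancel exp_minus)
  have "picard F f = f"
  proof (rule bcontfun_eqI)
    fix t
    define u where "u = clamp 0 Tmax t"
    have u: "u \<in> {0..Tmax}" unfolding u_def by (rule clamp_Tmax)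
    have "integral {0..u} (speed F (unweighted f)) = integral {0..u} (speed F z)"
      by (intro integral_cong speed_cong) (use u unweighted_f in auto)
    also have "\<dots> = z u" using z_eq u unfolding speed_def by auto
    finally show "apply_bcontfun (picard F f) t = apply_bcontfun f t"
      unfolding picard_apply[OF F] picard_raw_def u_def[symmetric] by (simp add: f u_def)
  qed
  then have "f = weighted_fixpoint F" by (rule weighted_fixpoint_unique[OF F])
  then show ?thesis
    using unweighted_f z_outside by (auto simp: travel_dist_def)
qed

lemma zF_eq_travel_dist:
  assumes F: "admissible F"
  shows "zF Tmax Td {Xmin..Xmax} V F = travel_dist F"
  unfolding zF_def
proof (rule the_equality)
  show "continuous_on {0..Tmax} (travel_dist F) \<and>
    (\<forall>t\<in>{0..Tmax}. travel_dist F t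
        = integral {0..t} (\<lambda>s. V (measure F (S_set Td {Xmin..Xmax} (travel_dist F) s)))) \<and>
    (\<forall>t. t \<notin> {0..Tmax} \<longrightarrow> travel_dist F t = 0)"
    using continuous_on_travel_dist travel_dist_eq_integral[OF F]
    by (auto simp: travel_dist_def speed_def[abs_def])
qed (use travel_dist_unique[OF F] in blast)

lemma travel_dist_diff_bounds:
  assumes F: "admissible F" and ab: "0 \<le> a" "a \<le> b" "b \<le> Tmax"
  shows "Vmin * (b - a) \<le> travel_dist F b - travel_dist F a"
    and "travel_dist F b - travel_dist F a \<le> Vmax * (b - a)"
proof -
  let ?h = "speed F (travel_dist F)"
  have h: "continuous_on {0..Tmax} ?h"
    by (rule continuous_on_speed[OF F continuous_on_travel_dist])
  have int_0b: "?h integrable_on {0..b}" and int_ab: "?h integrable_on {a..b}"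
    using ab by (auto intro!: integrable_continuous_interval continuous_on_subset[OF h])
  have diff: "travel_dist F b - travel_dist F a = integral {a..b} ?h"
    using travel_dist_eq_integral[OF F, of a] travel_dist_eq_integral[OF F, of b]
      Henstock_Kurzweil_Integration.integral_combine[OF ab(1,2) int_0b] ab by auto
  have "integral {a..b} (\<lambda>_. Vmin) \<le> integral {a..b} ?h"
    by (rule integral_le[OF _ int_ab]) (auto simp: speed_bounds)
  then show "Vmin * (b - a) \<le> travel_dist F b - travel_dist F a"
    using ab diff by (simp add: mult.commute)
  have "integral {a..b} ?h \<le> integral {a..b} (\<lambda>_. Vmax)"
    by (rule integral_le[OF int_ab]) (auto simp: speed_bounds)
  then show "travel_dist F b - travel_dist F a \<le> Vmax * (b - a)"
    using ab diff by (simp add: mult.commute)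
qed

lemma abs_travel_dist_diff_bounds:
  assumes F: "admissible F" and a: "a \<in> {0..Tmax}" and b: "b \<in> {0..Tmax}"
  shows "Vmin * \<bar>a - b\<bar> \<le> \<bar>travel_dist F a - travel_dist F b\<bar>"
    and "\<bar>travel_dist F a - travel_dist F b\<bar> \<le> Vmax * \<bar>a - b\<bar>"
proof -
  have "Vmin * \<bar>a - b\<bar> \<le> \<bar>travel_dist F a - travel_dist F b\<bar>
      \<and> \<bar>travel_dist F a - travel_dist F b\<bar> \<le> Vmax * \<bar>a - b\<bar>"
  proof (cases "a \<le> b")
    case True
    have "Vmin * (b - a) \<le> travel_dist F b - travel_dist F a"
      and "travel_dist F b - travel_dist F a \<le> Vmax * (b - a)"
      using travel_dist_diff_bounds[OF F, of a b] a b True by auto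
    moreover have "0 \<le> Vmin * (b - a)" using True Vmin_pos by simp
    ultimately show ?thesis using True by (simp add: abs_if)
  next
    case False
    have "Vmin * (a - b) \<le> travel_dist F a - travel_dist F b"
      and "travel_dist F a - travel_dist F b \<le> Vmax * (a - b)"
      using travel_dist_diff_bounds[OF F, of b a] a b False by auto
    moreover have "0 \<le> Vmin * (a - b)" using False Vmin_pos by simp
    ultimately show ?thesis using False by (simp add: abs_if)
  qed
  then show "Vmin * \<bar>a - b\<bar> \<le> \<bar>travel_dist F a - travel_dist F b\<bar>"
    and "\<bar>travel_dist F a - travel_dist F b\<bar> \<le> Vmax * \<bar>a - b\<bar>" by auto
qed

lemma travel_dist_0: "admissible F \<Longrightarrow> travel_dist F 0 = 0"
  using travel_dist_eq_integral[of F 0] Tmax_pos by simp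

lemma travel_dist_nonneg:
  assumes F: "admissible F" and t: "t \<in> {0..Tmax}"
  shows "0 \<le> travel_dist F t"
proof -
  have "0 \<le> Vmin * (t - 0)" using t Vmin_pos by simp
  also have "\<dots> \<le> travel_dist F t - travel_dist F 0"
    using travel_dist_diff_bounds(1)[OF F, of 0 t] t by simp
  finally show ?thesis using travel_dist_0[OF F] by simp
qed

lemma inj_on_travel_dist:
  assumes F: "admissible F"
  shows "inj_on (travel_dist F) {0..Tmax}"
proof (rule inj_onI)
  fix a b assume "a \<in> {0..Tmax}" "b \<in> {0..Tmax}" "travel_dist F a = travel_dist F b"
  then have "Vmin * \<bar>a - b\<bar> \<le> 0"
    using abs_travel_dist_diff_bounds(1)[OF F] by fastforce
  then show "a = b" using Vmin_pos by (simp add: mult_le_0_iff)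
qed

lemma travel_dist_image:
  "admissible F \<Longrightarrow> 0 \<le> y \<Longrightarrow> y \<le> travel_dist F Tmax \<Longrightarrow> y \<in> travel_dist F ` {0..Tmax}"
  using IVT'[of "travel_dist F" 0 y Tmax] travel_dist_0[of F] continuous_on_travel_dist[of F]
    Tmax_pos by auto

definition travel_dist_inv :: "(real \<times> real) measure \<Rightarrow> real \<Rightarrow> real" where
  "travel_dist_inv F y = the_inv_into {0..Tmax} (travel_dist F) y"

lemma
  assumes F: "admissible F" and y: "0 \<le> y" "y \<le> travel_dist F Tmax"
  shows travel_dist_inv_in_Icc: "travel_dist_inv F y \<in> {0..Tmax}"
    and travel_dist_travel_dist_inv: "travel_dist F (travel_dist_inv F y) = y"
  using the_inv_into_into[OF inj_on_travel_dist[OF F] travel_dist_image[OF F y] subset_refl]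
    f_the_inv_into_f[OF inj_on_travel_dist[OF F] travel_dist_image[OF F y]]
  unfolding travel_dist_inv_def by auto

lemma travel_dist_inv_dist_le:
  assumes F: "admissible F"
    and y1: "0 \<le> y1" "y1 \<le> travel_dist F Tmax" and y2: "0 \<le> y2" "y2 \<le> travel_dist F Tmax"
  shows "\<bar>travel_dist_inv F y1 - travel_dist_inv F y2\<bar> \<le> \<bar>y1 - y2\<bar> / Vmin"
proof -
  have "Vmin * \<bar>travel_dist_inv F y1 - travel_dist_inv F y2\<bar> \<le> \<bar>y1 - y2\<bar>"
    using abs_travel_dist_diff_bounds(1)[OF F travel_dist_inv_in_Icc[OF F y1] travel_dist_inv_in_Icc[OF F y2]]
    by (simp add: travel_dist_travel_dist_inv[OF F y1] travel_dist_travel_dist_inv[OF F y2])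
  then show ?thesis using Vmin_pos by (simp add: field_simps)
qed

lemma TF_eq_travel_dist_inv:
  "admissible F \<Longrightarrow> TF Tmax Td {Xmin..Xmax} V F td x = travel_dist_inv F (x + travel_dist F td) - td"
  unfolding TF_def travel_dist_inv_def zF_eq_travel_dist by simp

section \<open>Continuity in the demand measure\<close>

text \<open>A continuous approximation of the indicator of \<open>S\<^sub>s(z)\<close>: on \<open>Td \<times> X\<close> it can differ from
  it only on the rectangle \<open>[s, s + \<eta>] \<times> X\<close> and on the strip of height \<open>\<eta>\<close> above the boundary
  curve \<open>\<xi> = z(s) - z(\<tau>)\<close>, both of Lebesgue measure \<open>O(\<eta>)\<close>.\<close>

definition soft_indicator :: "(real \<Rightarrow> real) \<Rightarrow> real \<Rightarrow> real \<Rightarrow> real \<times> real \<Rightarrow> real" where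
  "soft_indicator z s \<eta> p = max 0 (min 1 ((s - fst p) / \<eta> + 1)) *
     max 0 (min 1 ((snd p - (z s - z (clamp 0 Tmax (fst p)))) / \<eta>))"

lemma continuous_on_soft_indicator:
  assumes z: "continuous_on {0..Tmax} z" and "0 < \<eta>"
  shows "continuous_on UNIV (soft_indicator z s \<eta>)"
  unfolding soft_indicator_def using \<open>0 < \<eta>\<close>
  by (intro continuous_intros continuous_on_compose2[OF continuous_on_clamp_real[OF z]]) auto

lemma soft_indicator_bounds: "0 \<le> soft_indicator z s \<eta> p" "soft_indicator z s \<eta> p \<le> 1"
  unfolding soft_indicator_def by (auto intro!: mult_nonneg_nonneg mult_le_one)

lemma soft_indicator_eq_indicator:
  assumes \<eta>: "0 < \<eta>" and \<tau>: "\<tau> \<in> Td" and \<xi>: "\<xi> \<in> {Xmin..Xmax}"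
    and not_R: "(\<tau>, \<xi>) \<notin> {s..s + \<eta>} \<times> {Xmin..Xmax}"
    and not_St: "(\<tau>, \<xi>) \<notin> graph_strip (\<lambda>\<tau>. z s - z (clamp 0 Tmax \<tau>)) 0 Tmax \<eta>"
  shows "soft_indicator z s \<eta> (\<tau>, \<xi>) = indicator (S_set Td {Xmin..Xmax} z s) (\<tau>, \<xi>)"
proof -
  have \<tau>_T: "\<tau> \<in> {0..Tmax}" using \<tau> Td_subset by auto
  then have clamp: "clamp 0 Tmax \<tau> = \<tau>" by (rule clamp_real_cancel)
  have \<xi>_cases: "\<xi> < z s - z \<tau> \<or> z s - z \<tau> + \<eta> < \<xi>"
    using not_St \<tau>_T by (auto simp: graph_strip_def clamp)
  show ?thesis
  proof (cases "\<tau> < s")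
    case True
    have first: "max 0 (min 1 ((s - \<tau>) / \<eta> + 1)) = (1::real)"
      using True \<eta> by (simp add: field_simps)
    show ?thesis
    proof (cases "\<xi> < z s - z \<tau>")
      case True
      then have "(\<xi> - (z s - z \<tau>)) / \<eta> < 0" using \<eta> by (simp add: divide_less_0_iff)
      then have "max 0 (min 1 ((\<xi> - (z s - z \<tau>)) / \<eta>)) = (0::real)" by simp
      moreover have "(\<tau>, \<xi>) \<notin> S_set Td {Xmin..Xmax} z s" using True by (auto simp: S_set_def)
      ultimately show ?thesis using first by (simp add: soft_indicator_def clamp)
    next
      case False
      then have above: "z s - z \<tau> + \<eta> < \<xi>" using \<xi>_cases by simp
      then have "1 < (\<xi> - (z s - z \<tau>)) / \<eta>" using \<eta> by (simp add: pos_less_divide_eq)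
      then have "max 0 (min 1 ((\<xi> - (z s - z \<tau>)) / \<eta>)) = (1::real)" by simp
      moreover have "(\<tau>, \<xi>) \<in> S_set Td {Xmin..Xmax} z s"
        using above \<open>\<tau> < s\<close> \<tau> \<tau>_T \<xi> \<eta> by (auto simp: S_set_def)
      ultimately show ?thesis using first by (simp add: soft_indicator_def clamp)
    qed
  next
    case False
    then have "s + \<eta> < \<tau>" using not_R \<xi> by auto
    then have "(s - \<tau>) / \<eta> < -1" using \<eta> by (simp add: pos_divide_less_eq)
    then have "max 0 (min 1 ((s - \<tau>) / \<eta> + 1)) = (0::real)" by simp
    moreover have "(\<tau>, \<xi>) \<notin> S_set Td {Xmin..Xmax} z s"
      using \<open>s + \<eta> < \<tau>\<close> \<eta> by (auto simp: S_set_def)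
    ultimately show ?thesis by (simp add: soft_indicator_def)
  qed
qed

lemma soft_indicator_integral_approx:
  assumes H: "admissible H" and z: "continuous_on {0..Tmax} z" and s: "s \<in> {0..Tmax}"
    and \<eta>: "0 < \<eta>"
  shows "\<bar>integral\<^sup>L H (soft_indicator z s \<eta>) - measure H (S_set Td {Xmin..Xmax} z s)\<bar>
           \<le> G * (Xmax - Xmin + Tmax) * \<eta>"
proof -
  interpret prob_space H using H by (simp add: density_bounded_def)
  have sets_H: "sets H = sets borel" using H by (simp add: density_bounded_def)
  define K where "K = Td \<times> {Xmin..Xmax}"
  define g where "g = (\<lambda>\<tau>. z s - z (clamp 0 Tmax \<tau>))"
  define R where "R = {s..s + \<eta>} \<times> {Xmin..Xmax}"
  define St where "St = graph_strip g 0 Tmax \<eta>"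
  define S where "S = S_set Td {Xmin..Xmax} z s"
  define E where "E = ((R \<union> St) \<inter> K) \<union> (UNIV - K)"
  have g: "continuous_on UNIV g"
    unfolding g_def by (intro continuous_intros continuous_on_clamp_real[OF z])
  have K: "K \<in> sets borel"
    unfolding K_def using compact_Td by (intro borel_closed closed_Times compact_imp_closed) auto
  have R: "R \<in> sets borel" unfolding R_def by (auto intro!: borel_closed closed_Times)
  have St: "St \<in> sets borel" unfolding St_def by (intro borel_closed closed_graph_strip[OF g])
  have S: "S \<in> sets borel" unfolding S_def by (rule S_set_borel[OF z s])
  have E: "E \<in> sets borel" unfolding E_def using K R St by auto
  have "emeasure lborel (R \<union> St) \<le> ennreal ((s + \<eta> - s) * (Xmax - Xmin) + Tmax * \<eta>)"
    unfolding R_def St_def using \<eta> Xmin_less Tmax_pos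
    by (intro emeasure_lborel_rectangle_Un_strip_le[OF g]) auto
  then have "measure H ((R \<union> St) \<inter> K) \<le> G * ((s + \<eta> - s) * (Xmax - Xmin) + Tmax * \<eta>)"
    by (intro density_bounded_measure_le[OF H])
       (use K R St Xmin_less Tmax_pos \<eta> G_pos in \<open>auto simp: K_def\<close>)
  moreover have "measure H E \<le> measure H ((R \<union> St) \<inter> K) + measure H (UNIV - K)"
    unfolding E_def using K R St sets_H by (intro measure_Un_le) auto
  moreover have "measure H (UNIV - K) = 0"
    using density_bounded_measure_compl[OF H] K by (simp add: K_def)
  ultimately have measure_E: "measure H E \<le> G * (Xmax - Xmin + Tmax) * \<eta>"
    by (simp add: algebra_simps)
  have "\<bar>integral\<^sup>L H (soft_indicator z s \<eta>) - measure H S\<bar> \<le> measure H E"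
  proof (rule abs_integral_minus_measure_le)
    show "soft_indicator z s \<eta> \<in> borel_measurable H"
      using borel_measurable_continuous_onI[OF continuous_on_soft_indicator[OF z \<eta>]]
        measurable_cong_sets[OF sets_H refl] by blast
    fix p assume "p \<notin> E"
    moreover obtain \<tau> \<xi> where p: "p = (\<tau>, \<xi>)" by (cases p)
    ultimately show "soft_indicator z s \<eta> p = indicator S p"
      unfolding p S_def
      by (intro soft_indicator_eq_indicator[OF \<eta>]) (auto simp: E_def K_def R_def St_def g_def)
  qed (use S E sets_H soft_indicator_bounds in auto)
  with measure_E show ?thesis unfolding S_def by linarith
qed

lemma measure_S_set_tendsto:
  assumes Fs: "\<And>n. admissible (Fs n)" and F: "admissible F" and weak: "weak_conv2 Fs F"
    and z: "continuous_on {0..Tmax} z" and s: "s \<in> {0..Tmax}"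
  shows "(\<lambda>n. measure (Fs n) (S_set Td {Xmin..Xmax} z s)) \<longlonglongrightarrow> measure F (S_set Td {Xmin..Xmax} z s)"
proof (rule LIMSEQ_I)
  fix e :: real assume e: "0 < e"
  define c where "c = G * (Xmax - Xmin + Tmax)"
  have "0 < c" unfolding c_def using G_pos Xmin_less Tmax_pos by simp
  define \<eta> where "\<eta> = e / (4 * c)"
  have \<eta>: "0 < \<eta>" and c\<eta>: "c * \<eta> = e / 4"
    unfolding \<eta>_def using e \<open>0 < c\<close> by simp_all
  have "bounded (range (soft_indicator z s \<eta>))"
    unfolding bounded_iff using soft_indicator_bounds by (intro exI[of _ 1]) auto
  then have "(\<lambda>n. integral\<^sup>L (Fs n) (soft_indicator z s \<eta>)) \<longlonglongrightarrow> integral\<^sup>L F (soft_indicator z s \<eta>)"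
    using weak continuous_on_soft_indicator[OF z \<eta>] unfolding weak_conv2_def by blast
  then obtain N where N: "\<And>n. n \<ge> N \<Longrightarrow>
      \<bar>integral\<^sup>L (Fs n) (soft_indicator z s \<eta>) - integral\<^sup>L F (soft_indicator z s \<eta>)\<bar> < e / 4"
    using LIMSEQ_D[of _ _ "e/4"] e by (metis real_norm_def zero_less_divide_iff zero_less_numeral)
  show "\<exists>N. \<forall>n\<ge>N. norm (measure (Fs n) (S_set Td {Xmin..Xmax} z s)
      - measure F (S_set Td {Xmin..Xmax} z s)) < e"
  proof (intro exI allI impI)
    fix n assume "N \<le> n"
    then show "norm (measure (Fs n) (S_set Td {Xmin..Xmax} z s)
        - measure F (S_set Td {Xmin..Xmax} z s)) < e"
      using N soft_indicator_integral_approx[OF Fs z s \<eta>, of n]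
        soft_indicator_integral_approx[OF F z s \<eta>] c\<eta> e
      unfolding c_def real_norm_def by fastforce
  qed
qed

lemma speed_tendsto:
  assumes Fs: "\<And>n. admissible (Fs n)" and F: "admissible F" and weak: "weak_conv2 Fs F"
    and z: "continuous_on {0..Tmax} z" and s: "s \<in> {0..Tmax}"
  shows "(\<lambda>n. speed (Fs n) z s) \<longlonglongrightarrow> speed F z s"
proof (rule LIMSEQ_by_abs_diff_bound)
  let ?a = "\<lambda>n. measure (Fs n) (S_set Td {Xmin..Xmax} z s)"
  let ?b = "measure F (S_set Td {Xmin..Xmax} z s)"
  show "\<bar>speed (Fs n) z s - speed F z s\<bar> \<le> LV * \<bar>?a n - ?b\<bar>" for n
    unfolding speed_def by (rule abs_V_diff_le) auto
  have "(\<lambda>n. LV * \<bar>?a n - ?b\<bar>) \<longlonglongrightarrow> LV * \<bar>?b - ?b\<bar>"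
    by (intro tendsto_intros measure_S_set_tendsto[OF Fs F weak z s])
  then show "(\<lambda>n. LV * \<bar>?a n - ?b\<bar>) \<longlonglongrightarrow> 0" by simp
qed

lemma picard_dist_le_integral:
  assumes F1: "admissible F1" and F2: "admissible F2"
  shows "dist (picard F1 f) (picard F2 f)
    \<le> integral {0..Tmax} (\<lambda>s. \<bar>speed F1 (unweighted f) s - speed F2 (unweighted f) s\<bar>)"
proof (rule dist_bound)
  fix t
  define w where "w = unweighted f"
  define u where "u = clamp 0 Tmax t"
  have u: "u \<in> {0..Tmax}" unfolding u_def by (rule clamp_Tmax)
  have w: "continuous_on {0..Tmax} w" unfolding w_def by (rule continuous_on_unweighted)
  have h1: "continuous_on {0..Tmax} (speed F1 w)" and h2: "continuous_on {0..Tmax} (speed F2 w)"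
    using continuous_on_speed[OF F1 w] continuous_on_speed[OF F2 w] .
  have i1: "speed F1 w integrable_on {0..u}" and i2: "speed F2 w integrable_on {0..u}"
    using u h1 h2 by (auto intro!: integrable_continuous_interval elim!: continuous_on_subset)
  have diff: "continuous_on {0..Tmax} (\<lambda>s. \<bar>speed F1 w s - speed F2 w s\<bar>)"
    by (intro continuous_intros h1 h2)
  have diff_u: "(\<lambda>s. \<bar>speed F1 w s - speed F2 w s\<bar>) integrable_on {0..u}"
    using u by (intro integrable_continuous_interval continuous_on_subset[OF diff]) auto
  have "\<bar>integral {0..u} (speed F1 w) - integral {0..u} (speed F2 w)\<bar>
      = norm (integral {0..u} (\<lambda>s. speed F1 w s - speed F2 w s))"
    using integral_diff[OF i1 i2] by simp
  also have "\<dots> \<le> integral {0..u} (\<lambda>s. \<bar>speed F1 w s - speed F2 w s\<bar>)"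
    by (rule integral_norm_bound_integral) (use i1 i2 diff_u in \<open>auto intro: integrable_diff\<close>)
  also have "\<dots> \<le> integral {0..Tmax} (\<lambda>s. \<bar>speed F1 w s - speed F2 w s\<bar>)"
    using u by (intro integral_subset_le integrable_continuous_interval
        continuous_on_subset[OF diff]) auto
  finally have I: "\<bar>integral {0..u} (speed F1 w) - integral {0..u} (speed F2 w)\<bar>
      \<le> integral {0..Tmax} (\<lambda>s. \<bar>speed F1 w s - speed F2 w s\<bar>)" .
  have "dist (picard F1 f t) (picard F2 f t)
      = exp (- bielecki_rate * u) * \<bar>integral {0..u} (speed F1 w) - integral {0..u} (speed F2 w)\<bar>"
    unfolding picard_apply[OF F1] picard_apply[OF F2] picard_raw_def dist_real_def
      u_def[symmetric] w_def[symmetric]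
    by (simp add: abs_mult right_diff_distrib[symmetric])
  also have "\<dots> \<le> 1 * integral {0..Tmax} (\<lambda>s. \<bar>speed F1 w s - speed F2 w s\<bar>)"
    using I u bielecki_rate_pos by (intro mult_mono) auto
  finally show "dist (picard F1 f t) (picard F2 f t)
      \<le> integral {0..Tmax} (\<lambda>s. \<bar>speed F1 (unweighted f) s - speed F2 (unweighted f) s\<bar>)"
    unfolding w_def by simp
qed

lemma weighted_fixpoint_tendsto:
  assumes Fs: "\<And>n. admissible (Fs n)" and F: "admissible F" and weak: "weak_conv2 Fs F"
  shows "(\<lambda>n. dist (weighted_fixpoint (Fs n)) (weighted_fixpoint F)) \<longlonglongrightarrow> 0"
proof (rule LIMSEQ_by_abs_diff_bound)
  define w where "w = unweighted (weighted_fixpoint F)"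
  have w: "continuous_on {0..Tmax} w" unfolding w_def by (rule continuous_on_unweighted)
  define e where "e = (\<lambda>n. integral {0..Tmax} (\<lambda>s. \<bar>speed (Fs n) w s - speed F w s\<bar>))"
  show "\<bar>dist (weighted_fixpoint (Fs n)) (weighted_fixpoint F) - 0\<bar> \<le> 2 * e n" for n
  proof -
    have "dist (weighted_fixpoint (Fs n)) (weighted_fixpoint F)
        \<le> dist (picard (Fs n) (weighted_fixpoint F)) (picard F (weighted_fixpoint F)) / (1 - 1/2)"
      by (rule fixed_point_dist_le[OF picard_contraction[OF Fs]])
         (use picard_weighted_fixpoint[OF Fs] picard_weighted_fixpoint[OF F] in auto)
    also have "\<dots> \<le> e n / (1 - 1/2)"
      using picard_dist_le_integral[OF Fs F] unfolding e_def w_def by (intro divide_right_mono) auto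
    finally show ?thesis by simp
  qed
  have "e \<longlonglongrightarrow> integral {0..Tmax} (\<lambda>s. 0::real)"
    unfolding e_def
  proof (rule dominated_convergence(2))
    show "(\<lambda>s. \<bar>speed (Fs n) w s - speed F w s\<bar>) integrable_on {0..Tmax}" for n
      by (intro integrable_continuous_interval continuous_intros
          continuous_on_speed[OF Fs w] continuous_on_speed[OF F w])
    show "(\<lambda>_. 2 * Vmax) integrable_on {0..Tmax}"
      by (intro integrable_continuous_interval continuous_intros)
    show "norm \<bar>speed (Fs n) w s - speed F w s\<bar> \<le> 2 * Vmax" for n s
      using abs_speed_le[of "Fs n" w s] abs_speed_le[of F w s] by simp
    show "(\<lambda>n. \<bar>speed (Fs n) w s - speed F w s\<bar>) \<longlonglongrightarrow> 0" if "s \<in> {0..Tmax}" for s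
      using tendsto_rabs[OF LIM_zero[OF speed_tendsto[OF Fs F weak w that]]] by simp
  qed
  then show "(\<lambda>n. 2 * e n) \<longlonglongrightarrow> 0"
    using tendsto_mult_right_zero by simp
qed

lemma abs_travel_dist_measure_diff_le:
  assumes t: "t \<in> {0..Tmax}"
  shows "\<bar>travel_dist F1 t - travel_dist F2 t\<bar>
    \<le> exp (bielecki_rate * Tmax) * dist (weighted_fixpoint F1) (weighted_fixpoint F2)"
proof -
  have "\<bar>travel_dist F1 t - travel_dist F2 t\<bar> = exp (bielecki_rate * t)
      * \<bar>apply_bcontfun (weighted_fixpoint F1) t - apply_bcontfun (weighted_fixpoint F2) t\<bar>"
    using t by (simp add: travel_dist_def unweighted_def abs_mult right_diff_distrib[symmetric])
  also have "\<dots> \<le> exp (bielecki_rate * Tmax) * dist (weighted_fixpoint F1) (weighted_fixpoint F2)"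
    using t bielecki_rate_pos dist_bounded[of "weighted_fixpoint F1" t "weighted_fixpoint F2"]
    by (intro mult_mono) (auto simp: dist_real_def)
  finally show ?thesis .
qed

end

section \<open>Travel time and cost\<close>

definition cost :: "real \<Rightarrow> real \<Rightarrow> real \<Rightarrow> real \<Rightarrow> real \<Rightarrow> real \<Rightarrow> real" where
  "cost \<alpha> \<beta> \<gamma> td ta T = \<alpha> * T + \<beta> * pos_part (ta - td - T) + \<gamma> * pos_part (td + T - ta)"

lemma Jcost_eq_cost:
  "Jcost \<alpha> \<beta> \<gamma> Tmax Td X V td x ta F = cost \<alpha> \<beta> \<gamma> td ta (TF Tmax Td X V F td x)"
  by (simp add: Jcost_def cost_def)

lemma pos_part_dist_le: "\<bar>pos_part a - pos_part b\<bar> \<le> \<bar>a - b\<bar>"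
  unfolding pos_part_def by (auto simp: max_def)

lemma cost_dist_le:
  assumes "0 \<le> \<alpha>" "0 \<le> \<beta>" "0 \<le> \<gamma>"
  shows "\<bar>cost \<alpha> \<beta> \<gamma> td1 ta1 T1 - cost \<alpha> \<beta> \<gamma> td2 ta2 T2\<bar>
    \<le> (\<alpha> + \<beta> + \<gamma>) * \<bar>T1 - T2\<bar> + (\<beta> + \<gamma>) * (\<bar>td1 - td2\<bar> + \<bar>ta1 - ta2\<bar>)"
proof -
  define D where "D = \<bar>T1 - T2\<bar> + (\<bar>td1 - td2\<bar> + \<bar>ta1 - ta2\<bar>)"
  define P where "P = pos_part (ta1 - td1 - T1) - pos_part (ta2 - td2 - T2)"
  define Q where "Q = pos_part (td1 + T1 - ta1) - pos_part (td2 + T2 - ta2)"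
  have P: "\<bar>P\<bar> \<le> D" and Q: "\<bar>Q\<bar> \<le> D"
    unfolding P_def Q_def D_def
    using pos_part_dist_le[of "ta1 - td1 - T1" "ta2 - td2 - T2"]
      pos_part_dist_le[of "td1 + T1 - ta1" "td2 + T2 - ta2"] by linarith+
  have "cost \<alpha> \<beta> \<gamma> td1 ta1 T1 - cost \<alpha> \<beta> \<gamma> td2 ta2 T2 = \<alpha> * (T1 - T2) + \<beta> * P + \<gamma> * Q"
    unfolding cost_def P_def Q_def by (simp add: algebra_simps)
  also have "\<bar>\<dots>\<bar> \<le> \<alpha> * \<bar>T1 - T2\<bar> + \<beta> * \<bar>P\<bar> + \<gamma> * \<bar>Q\<bar>"
    using assms abs_triangle_ineq[of "\<alpha> * (T1 - T2) + \<beta> * P" "\<gamma> * Q"]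
      abs_triangle_ineq[of "\<alpha> * (T1 - T2)" "\<beta> * P"] by (simp add: abs_mult)
  also have "\<dots> \<le> \<alpha> * \<bar>T1 - T2\<bar> + \<beta> * D + \<gamma> * D"
    using assms P Q by (intro add_mono mult_left_mono) auto
  also have "\<dots> = (\<alpha> + \<beta> + \<gamma>) * \<bar>T1 - T2\<bar> + (\<beta> + \<gamma>) * (\<bar>td1 - td2\<bar> + \<bar>ta1 - ta2\<bar>)"
    unfolding D_def by (simp add: algebra_simps)
  finally show ?thesis .
qed

context travel_model
begin

definition trips_within_horizon :: "(real \<times> real) measure \<Rightarrow> bool" where
  "trips_within_horizon F \<longleftrightarrow> (\<forall>td \<in> Td. \<forall>x \<in> {Xmin..Xmax}. x + travel_dist F td \<le> travel_dist F Tmax)"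

lemma trip_end_bounds:
  assumes F: "admissible F" "trips_within_horizon F" and "td \<in> Td" "x \<in> {Xmin..Xmax}"
  shows "0 \<le> x + travel_dist F td" "x + travel_dist F td \<le> travel_dist F Tmax"
  using assms travel_dist_nonneg[OF F(1), of td] Td_subset Xmin_nonneg
  by (auto simp: trips_within_horizon_def)

lemma TF_dist_le:
  assumes F: "admissible F" "trips_within_horizon F"
    and td1: "td1 \<in> Td" and x1: "x1 \<in> {Xmin..Xmax}" and td2: "td2 \<in> Td" and x2: "x2 \<in> {Xmin..Xmax}"
  shows "\<bar>TF Tmax Td {Xmin..Xmax} V F td1 x1 - TF Tmax Td {Xmin..Xmax} V F td2 x2\<bar>
          \<le> (\<bar>x1 - x2\<bar> + Vmax * \<bar>td1 - td2\<bar>) / Vmin + \<bar>td1 - td2\<bar>"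
proof -
  let ?y1 = "x1 + travel_dist F td1" and ?y2 = "x2 + travel_dist F td2"
  have "\<bar>travel_dist F td1 - travel_dist F td2\<bar> \<le> Vmax * \<bar>td1 - td2\<bar>"
    using abs_travel_dist_diff_bounds(2)[OF F(1)] td1 td2 Td_subset by blast
  then have "\<bar>?y1 - ?y2\<bar> / Vmin \<le> (\<bar>x1 - x2\<bar> + Vmax * \<bar>td1 - td2\<bar>) / Vmin"
    using Vmin_pos by (intro divide_right_mono) auto
  moreover have "\<bar>travel_dist_inv F ?y1 - travel_dist_inv F ?y2\<bar> \<le> \<bar>?y1 - ?y2\<bar> / Vmin"
    by (rule travel_dist_inv_dist_le[OF F(1) trip_end_bounds[OF F td1 x1] trip_end_bounds[OF F td2 x2]])
  ultimately show ?thesis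
    unfolding TF_eq_travel_dist_inv[OF F(1)] by linarith
qed

lemma Jcost_lipschitz:
  assumes F: "admissible F" "trips_within_horizon F" and "0 \<le> \<alpha>" "0 \<le> \<beta>" "0 \<le> \<gamma>"
  shows "((\<alpha> + \<beta> + \<gamma>) * ((1 + Vmax) / Vmin + 1) + 2 * (\<beta> + \<gamma>))-lipschitz_on
      (Td \<times> {Xmin..Xmax} \<times> Ta) (\<lambda>(td, x, ta). Jcost \<alpha> \<beta> \<gamma> Tmax Td {Xmin..Xmax} V td x ta F)"
proof (rule lipschitz_onI)
  show "0 \<le> (\<alpha> + \<beta> + \<gamma>) * ((1 + Vmax) / Vmin + 1) + 2 * (\<beta> + \<gamma>)"
    using assms Vmin_pos Vmin_le_Vmax by simp
  fix p q assume p: "p \<in> Td \<times> {Xmin..Xmax} \<times> Ta" and q: "q \<in> Td \<times> {Xmin..Xmax} \<times> Ta"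
  obtain td1 x1 ta1 where p_eq: "p = (td1, x1, ta1)" by (cases p) auto
  obtain td2 x2 ta2 where q_eq: "q = (td2, x2, ta2)" by (cases q) auto
  define d where "d = dist p q"
  have dtd: "\<bar>td1 - td2\<bar> \<le> d" and dx: "\<bar>x1 - x2\<bar> \<le> d" and dta: "\<bar>ta1 - ta2\<bar> \<le> d"
    using dist_fst_le[of p q] dist_snd_le[of p q] dist_fst_le[of "snd p" "snd q"]
      dist_snd_le[of "snd p" "snd q"]
    unfolding d_def p_eq q_eq by (auto simp: dist_real_def)
  let ?J = "\<lambda>(td, x, ta). Jcost \<alpha> \<beta> \<gamma> Tmax Td {Xmin..Xmax} V td x ta F"
  let ?T1 = "TF Tmax Td {Xmin..Xmax} V F td1 x1" and ?T2 = "TF Tmax Td {Xmin..Xmax} V F td2 x2"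
  have "\<bar>?T1 - ?T2\<bar> \<le> (\<bar>x1 - x2\<bar> + Vmax * \<bar>td1 - td2\<bar>) / Vmin + \<bar>td1 - td2\<bar>"
    by (rule TF_dist_le[OF F]) (use p q p_eq q_eq in auto)
  also have "\<dots> \<le> (d + Vmax * d) / Vmin + d"
    using dx dtd Vmin_pos Vmin_le_Vmax by (intro add_mono divide_right_mono mult_left_mono) auto
  also have "\<dots> = ((1 + Vmax) / Vmin + 1) * d" by (simp add: field_simps)
  finally have dT: "\<bar>?T1 - ?T2\<bar> \<le> ((1 + Vmax) / Vmin + 1) * d" .
  have "\<bar>cost \<alpha> \<beta> \<gamma> td1 ta1 ?T1 - cost \<alpha> \<beta> \<gamma> td2 ta2 ?T2\<bar>
      \<le> (\<alpha> + \<beta> + \<gamma>) * \<bar>?T1 - ?T2\<bar> + (\<beta> + \<gamma>) * (\<bar>td1 - td2\<bar> + \<bar>ta1 - ta2\<bar>)"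
    by (rule cost_dist_le) (use assms in auto)
  also have "\<dots> \<le> (\<alpha> + \<beta> + \<gamma>) * (((1 + Vmax) / Vmin + 1) * d) + (\<beta> + \<gamma>) * (d + d)"
    using dT dtd dta assms by (intro add_mono mult_left_mono) auto
  also have "\<dots> = ((\<alpha> + \<beta> + \<gamma>) * ((1 + Vmax) / Vmin + 1) + 2 * (\<beta> + \<gamma>)) * dist p q"
    unfolding d_def by (simp add: algebra_simps)
  finally show "dist (?J p) (?J q)
      \<le> ((\<alpha> + \<beta> + \<gamma>) * ((1 + Vmax) / Vmin + 1) + 2 * (\<beta> + \<gamma>)) * dist p q"
    by (simp add: p_eq q_eq Jcost_eq_cost dist_real_def)
qed

lemma TF_tendsto:
  assumes Fs: "\<And>n. admissible (Fs n)" "\<And>n. trips_within_horizon (Fs n)"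
    and F: "admissible F" "trips_within_horizon F" and weak: "weak_conv2 Fs F"
    and tds: "\<And>n. tds n \<in> Td" and xs: "\<And>n. xs n \<in> {Xmin..Xmax}"
    and td: "td \<in> Td" and x: "x \<in> {Xmin..Xmax}" and "tds \<longlonglongrightarrow> td" "xs \<longlonglongrightarrow> x"
  shows "(\<lambda>n. TF Tmax Td {Xmin..Xmax} V (Fs n) (tds n) (xs n)) \<longlonglongrightarrow> TF Tmax Td {Xmin..Xmax} V F td x"
proof -
  define \<rho> where "\<rho> n = exp (bielecki_rate * Tmax) * dist (weighted_fixpoint (Fs n)) (weighted_fixpoint F)"
    for n
  have "\<rho> \<longlonglongrightarrow> 0"
    unfolding \<rho>_def by (rule tendsto_mult_right_zero[OF weighted_fixpoint_tendsto[OF Fs(1) F(1) weak]])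
  have \<rho>: "\<bar>travel_dist (Fs n) t - travel_dist F t\<bar> \<le> \<rho> n" if "t \<in> {0..Tmax}" for n t
    unfolding \<rho>_def by (rule abs_travel_dist_measure_diff_le[OF that])
  have td_T: "td \<in> {0..Tmax}" and tds_T: "tds n \<in> {0..Tmax}" for n
    using td tds[of n] Td_subset by auto
  define a where "a n = travel_dist_inv (Fs n) (xs n + travel_dist (Fs n) (tds n))" for n
  define a0 where "a0 = travel_dist_inv F (x + travel_dist F td)"
  have a: "a n \<in> {0..Tmax}" "travel_dist (Fs n) (a n) = xs n + travel_dist (Fs n) (tds n)" for n
    unfolding a_def using travel_dist_inv_in_Icc[OF Fs(1) trip_end_bounds[OF Fs(1,2) tds xs]]
      travel_dist_travel_dist_inv[OF Fs(1) trip_end_bounds[OF Fs(1,2) tds xs]] by auto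
  have a0: "a0 \<in> {0..Tmax}" "travel_dist F a0 = x + travel_dist F td"
    unfolding a0_def using travel_dist_inv_in_Icc[OF F(1) trip_end_bounds[OF F td x]]
      travel_dist_travel_dist_inv[OF F(1) trip_end_bounds[OF F td x]] by auto
  define b where "b n = (2 * \<rho> n + \<bar>xs n - x\<bar> + \<bar>travel_dist F (tds n) - travel_dist F td\<bar>) / Vmin" for n
  have a_bound: "\<bar>a n - a0\<bar> \<le> b n" for n
  proof -
    have "Vmin * \<bar>a n - a0\<bar> \<le> \<bar>travel_dist F (a n) - travel_dist F a0\<bar>"
      by (rule abs_travel_dist_diff_bounds(1)[OF F(1) a(1) a0(1)])
    also have "\<dots> \<le> 2 * \<rho> n + \<bar>xs n - x\<bar> + \<bar>travel_dist F (tds n) - travel_dist F td\<bar>"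
      using \<rho>[OF a(1)[of n], of n] \<rho>[OF tds_T[of n], of n] a(2)[of n] a0(2) by linarith
    finally show ?thesis unfolding b_def using Vmin_pos by (simp add: field_simps)
  qed
  have "(\<lambda>n. travel_dist F (tds n)) \<longlonglongrightarrow> travel_dist F td"
    using continuous_on_tendsto_compose[OF continuous_on_travel_dist \<open>tds \<longlonglongrightarrow> td\<close> td_T] tds_T
    by simp
  then have "b \<longlonglongrightarrow> (2 * 0 + \<bar>x - x\<bar> + \<bar>travel_dist F td - travel_dist F td\<bar>) / Vmin"
    unfolding b_def by (intro tendsto_intros \<open>\<rho> \<longlonglongrightarrow> 0\<close> \<open>xs \<longlonglongrightarrow> x\<close>) (use Vmin_pos in auto)
  then have "b \<longlonglongrightarrow> 0" by simp
  with a_bound have "a \<longlonglongrightarrow> a0" by (rule LIMSEQ_by_abs_diff_bound)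
  then have "(\<lambda>n. a n - tds n) \<longlonglongrightarrow> a0 - td"
    by (intro tendsto_intros \<open>tds \<longlonglongrightarrow> td\<close>)
  then show ?thesis
    unfolding a_def a0_def TF_eq_travel_dist_inv[OF Fs(1)] TF_eq_travel_dist_inv[OF F(1)] .
qed

lemma Jcost_tendsto:
  assumes Fs: "\<And>n. admissible (Fs n)" "\<And>n. trips_within_horizon (Fs n)"
    and F: "admissible F" "trips_within_horizon F" and weak: "weak_conv2 Fs F"
    and tds: "\<And>n. tds n \<in> Td" and xs: "\<And>n. xs n \<in> {Xmin..Xmax}"
    and td: "td \<in> Td" and x: "x \<in> {Xmin..Xmax}"
    and "tds \<longlonglongrightarrow> td" "xs \<longlonglongrightarrow> x" "tas \<longlonglongrightarrow> ta"
    and "0 \<le> \<alpha>" "0 \<le> \<beta>" "0 \<le> \<gamma>"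
  shows "(\<lambda>n. Jcost \<alpha> \<beta> \<gamma> Tmax Td {Xmin..Xmax} V (tds n) (xs n) (tas n) (Fs n))
           \<longlonglongrightarrow> Jcost \<alpha> \<beta> \<gamma> Tmax Td {Xmin..Xmax} V td x ta F"
proof (rule LIMSEQ_by_abs_diff_bound)
  define T where "T n = TF Tmax Td {Xmin..Xmax} V (Fs n) (tds n) (xs n)" for n
  define T0 where "T0 = TF Tmax Td {Xmin..Xmax} V F td x"
  show "\<bar>Jcost \<alpha> \<beta> \<gamma> Tmax Td {Xmin..Xmax} V (tds n) (xs n) (tas n) (Fs n)
      - Jcost \<alpha> \<beta> \<gamma> Tmax Td {Xmin..Xmax} V td x ta F\<bar>
      \<le> (\<alpha> + \<beta> + \<gamma>) * \<bar>T n - T0\<bar> + (\<beta> + \<gamma>) * (\<bar>tds n - td\<bar> + \<bar>tas n - ta\<bar>)" for n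
    unfolding Jcost_eq_cost T_def T0_def by (rule cost_dist_le) fact+
  have "T \<longlonglongrightarrow> T0"
    unfolding T_def T0_def by (rule TF_tendsto) fact+
  then have "(\<lambda>n. (\<alpha> + \<beta> + \<gamma>) * \<bar>T n - T0\<bar> + (\<beta> + \<gamma>) * (\<bar>tds n - td\<bar> + \<bar>tas n - ta\<bar>))
      \<longlonglongrightarrow> (\<alpha> + \<beta> + \<gamma>) * \<bar>T0 - T0\<bar> + (\<beta> + \<gamma>) * (\<bar>td - td\<bar> + \<bar>ta - ta\<bar>)"
    by (intro tendsto_intros \<open>tds \<longlonglongrightarrow> td\<close> \<open>tas \<longlonglongrightarrow> ta\<close>)
  then show "(\<lambda>n. (\<alpha> + \<beta> + \<gamma>) * \<bar>T n - T0\<bar> + (\<beta> + \<gamma>) * (\<bar>tds n - td\<bar> + \<bar>tas n - ta\<bar>))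
      \<longlonglongrightarrow> 0" by simp
qed

end


theorem proposition5:
  fixes Tmax Xmin Xmax G \<alpha> \<beta> \<gamma> Vmin Vmax :: real
    and Td Ta :: "real set"
    and m :: "(real \<times> real) measure"
    and V :: "real \<Rightarrow> real"
  assumes Tmax_pos: "0 < Tmax"
    and Td: "compact Td" "Td \<subseteq> {0..Tmax}"
    and Ta: "compact Ta" "Ta \<subseteq> {0..Tmax}"
    and X: "0 \<le> Xmin" "Xmin < Xmax"
    and m: "prob_space m" "sets m = sets borel" "emeasure m ({Xmin..Xmax} \<times> Ta) = 1"
    and G: "0 < G"
    and coeffs: "0 < \<alpha>" "0 < \<beta>" "0 < \<gamma>"
    and V_dec: "\<And>a b. 0 \<le> a \<Longrightarrow> a < b \<Longrightarrow> V b < V a"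
    and V_lip: "\<exists>L. L-lipschitz_on {0..} V"
    and V_bnd: "0 < Vmin" "Vmin < Vmax" "\<And>u. 0 \<le> u \<Longrightarrow> Vmin \<le> V u \<and> V u \<le> Vmax"
    and wd: "\<And>F td x. F \<in> P_mG Td {Xmin..Xmax} Ta m G \<Longrightarrow> td \<in> Td \<Longrightarrow> x \<in> {Xmin..Xmax} \<Longrightarrow>
              x + zF Tmax Td {Xmin..Xmax} V F td \<le> zF Tmax Td {Xmin..Xmax} V F Tmax"
  shows
    "(\<forall>tds xs tas Fs td x ta F.
        (\<forall>n. tds n \<in> Td \<and> xs n \<in> {Xmin..Xmax} \<and> tas n \<in> Ta \<and> Fs n \<in> P_mG Td {Xmin..Xmax} Ta m G)
        \<and> td \<in> Td \<and> x \<in> {Xmin..Xmax} \<and> ta \<in> Ta \<and> F \<in> P_mG Td {Xmin..Xmax} Ta m G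
        \<and> tds \<longlonglongrightarrow> td \<and> xs \<longlonglongrightarrow> x \<and> tas \<longlonglongrightarrow> ta \<and> weak_conv2 Fs F
        \<longrightarrow> (\<lambda>n. Jcost \<alpha> \<beta> \<gamma> Tmax Td {Xmin..Xmax} V (tds n) (xs n) (tas n) (Fs n))
              \<longlonglongrightarrow> Jcost \<alpha> \<beta> \<gamma> Tmax Td {Xmin..Xmax} V td x ta F)
     \<and> (\<forall>F \<in> P_mG Td {Xmin..Xmax} Ta m G. \<exists>L.
          L-lipschitz_on (Td \<times> {Xmin..Xmax} \<times> Ta)
            (\<lambda>(td, x, ta). Jcost \<alpha> \<beta> \<gamma> Tmax Td {Xmin..Xmax} V td x ta F))"
proof -
  obtain L where L: "L-lipschitz_on {0..} V" using V_lip by blast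
  interpret travel_model Tmax Td Xmin Xmax G V Vmin Vmax L
    by unfold_locales (use Tmax_pos Td X G L V_bnd in auto)
  have admissible: "admissible F" if "F \<in> P_mG Td {Xmin..Xmax} Ta m G" for F
    using that by (rule P_mG_density_bounded)
  have horizon: "trips_within_horizon F" if "F \<in> P_mG Td {Xmin..Xmax} Ta m G" for F
    using wd[OF that] zF_eq_travel_dist[OF admissible[OF that]]
    by (simp add: trips_within_horizon_def)
  show ?thesis
  proof (intro conjI allI impI ballI)
    fix tds xs tas Fs td x ta F
    assume "(\<forall>n. tds n \<in> Td \<and> xs n \<in> {Xmin..Xmax} \<and> tas n \<in> Ta \<and> Fs n \<in> P_mG Td {Xmin..Xmax} Ta m G)
        \<and> td \<in> Td \<and> x \<in> {Xmin..Xmax} \<and> ta \<in> Ta \<and> F \<in> P_mG Td {Xmin..Xmax} Ta m G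
        \<and> tds \<longlonglongrightarrow> td \<and> xs \<longlonglongrightarrow> x \<and> tas \<longlonglongrightarrow> ta \<and> weak_conv2 Fs F"
    then show "(\<lambda>n. Jcost \<alpha> \<beta> \<gamma> Tmax Td {Xmin..Xmax} V (tds n) (xs n) (tas n) (Fs n))
        \<longlonglongrightarrow> Jcost \<alpha> \<beta> \<gamma> Tmax Td {Xmin..Xmax} V td x ta F"
      using admissible horizon coeffs by (intro Jcost_tendsto) auto
  next
    fix F assume F: "F \<in> P_mG Td {Xmin..Xmax} Ta m G"
    show "\<exists>L. L-lipschitz_on (Td \<times> {Xmin..Xmax} \<times> Ta)
        (\<lambda>(td, x, ta). Jcost \<alpha> \<beta> \<gamma> Tmax Td {Xmin..Xmax} V td x ta F)"
      using Jcost_lipschitz[OF admissible[OF F] horizon[OF F]] coeffs by (meson less_imp_le)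
  qed
qed

end
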